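(* Let $n\ge 3$. If $\mu$ is a symmetric measure on $L_n$ such that $C_\mu=C_{L_n}$, then $M_1(\mu)=C^0_\mu=C_{L_n}$.
   Context: $L_n$ is the path graph with vertices $\{1,\dots,n\}$ and edges $\{j,j+1\}$, with distance $|i-j|$. A measure on $L_n$ is a weight function $\mu:\{1,\dots,n\}\to(0,\infty)$, $\mu(A)=\sum_{v\in A}\mu(v)$; it is symmetric if $\mu(j)=\mu(n+1-j)$ for all $j$. Closed balls: $B(x,r)=\{y:|x-y|\le r\}$. $C_\mu=\sup\{\mu(B(x,2k+1))/\mu(B(x,k)):1\le x\le n,\ k\ge0\}$, $C_{L_n}=\inf_\mu C_\mu$, $C^0_\mu=\max_x\mu(B(x,1))/\mu(x)$, and $M_1(\mu)=\sup\{\mu(B(1,2k+1))/\mu(B(1,k)): k\in\mathbb Z,\ 0\le k<\lceil\frac{n-2}{3}\rceil\}$. *)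

theory Defs
  imports Complex_Main
begin

text \<open>Path graph L_n on vertices {1..n} with distance |i - j|.
  A measure is a weight function mu, required positive on {1..n}; values
  outside {1..n} are irrelevant.\<close>

definition pg_ball :: "nat \<Rightarrow> nat \<Rightarrow> nat \<Rightarrow> nat set" where
  "pg_ball n x r = {y \<in> {1..n}. \<bar>int x - int y\<bar> \<le> int r}"

definition pg_meas :: "(nat \<Rightarrow> real) \<Rightarrow> nat set \<Rightarrow> real" where
  "pg_meas mu A = (\<Sum>v\<in>A. mu v)"

definition pg_is_measure :: "nat \<Rightarrow> (nat \<Rightarrow> real) \<Rightarrow> bool" where
  "pg_is_measure n mu \<longleftrightarrow> (\<forall>v\<in>{1..n}. 0 < mu v)"

definition pg_symmetric :: "nat \<Rightarrow> (nat \<Rightarrow> real) \<Rightarrow> bool" where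
  "pg_symmetric n mu \<longleftrightarrow> (\<forall>j\<in>{1..n}. mu j = mu (n + 1 - j))"

definition C_mu :: "nat \<Rightarrow> (nat \<Rightarrow> real) \<Rightarrow> real" where
  "C_mu n mu = Sup {pg_meas mu (pg_ball n x (2*k+1)) / pg_meas mu (pg_ball n x k) | x k.
                     x \<in> {1..n}}"

definition C_L :: "nat \<Rightarrow> real" where
  "C_L n = Inf {C_mu n mu | mu. pg_is_measure n mu}"

definition C0_mu :: "nat \<Rightarrow> (nat \<Rightarrow> real) \<Rightarrow> real" where
  "C0_mu n mu = Max {pg_meas mu (pg_ball n x 1) / mu x | x. x \<in> {1..n}}"

definition M1 :: "nat \<Rightarrow> (nat \<Rightarrow> real) \<Rightarrow> real" where
  "M1 n mu = Sup {pg_meas mu (pg_ball n 1 (2*k+1)) / pg_meas mu (pg_ball n 1 k) | k.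
                   k < nat \<lceil>(real n - 2) / 3\<rceil>}"

end

theory Submission
  imports Defs
begin

(*
  Both identities come from a first-order optimality condition. If mu is optimal, then for
  every direction g some ball on which mu attains C_mu has a ratio that mu + t g does not
  strictly decrease, since otherwise mu + t g would be a better measure for small t > 0.

  For g = 1 the tight ball must have radius 0: for radius at least 1 the counting measure
  has ratio at most 7/3, whereas C_mu > 7/3 on every path with at least three vertices.
  Hence C0 = C_mu.

  For g = -w, where w y = 4^-y + 4^-(n+1-y), every ball that misses both endpoints has
  w-ratio above 3, and 3 >= C_L by the counting measure. So the tight ball contains an
  endpoint, by symmetry the vertex 1, and its ratio is bounded by that of a ball centred
  at 1. The ratio bound at radius 0 together with C_mu <= 3 makes mu concave, hence (being
  symmetric) unimodal, and this rules out the radii at least ceil((n-2)/3) that M1 does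
  not see.
*)

lemma pg_ball_eq_atLeastAtMost:
  assumes "x \<in> {1..n}"
  shows "pg_ball n x r = {max 1 (x - r) .. min n (x + r)}"
  using assms unfolding pg_ball_def by (auto simp: max_def min_def split: if_splits)

lemma pg_ball_subset: "pg_ball n x r \<subseteq> {1..n}"
  unfolding pg_ball_def by auto

lemma finite_pg_ball [simp]: "finite (pg_ball n x r)"
  by (rule finite_subset[OF pg_ball_subset]) simp

lemma pg_ball_zero: "x \<in> {1..n} \<Longrightarrow> pg_ball n x 0 = {x}"
  unfolding pg_ball_def by auto

lemma pg_ball_center_1: "pg_ball n 1 r = {1..min n (r + 1)}"
  unfolding pg_ball_def by auto

lemma pg_ball_mono: "r \<le> s \<Longrightarrow> pg_ball n x r \<subseteq> pg_ball n x s"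
  unfolding pg_ball_def by auto

lemma center_in_pg_ball: "x \<in> {1..n} \<Longrightarrow> x \<in> pg_ball n x r"
  unfolding pg_ball_def by auto

lemma pg_ball_reflect:
  assumes "x \<in> {1..n}"
  shows "pg_ball n (n + 1 - x) r = (\<lambda>y. n + 1 - y) ` pg_ball n x r"
proof (intro equalityI subsetI)
  fix y assume y: "y \<in> pg_ball n (n + 1 - x) r"
  then have "n + 1 - y \<in> pg_ball n x r" "y = n + 1 - (n + 1 - y)"
    using assms unfolding pg_ball_def by auto
  then show "y \<in> (\<lambda>y. n + 1 - y) ` pg_ball n x r" by blast
next
  fix y assume "y \<in> (\<lambda>y. n + 1 - y) ` pg_ball n x r"
  then obtain z where "z \<in> pg_ball n x r" "y = n + 1 - z" by blast
  then show "y \<in> pg_ball n (n + 1 - x) r"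
    using assms unfolding pg_ball_def by auto
qed

lemma card_pg_ball:
  "x \<in> {1..n} \<Longrightarrow> card (pg_ball n x r) = Suc (min n (x + r)) - max 1 (x - r)"
  by (simp add: pg_ball_eq_atLeastAtMost)

lemma card_pg_ball_double_le:
  "x \<in> {1..n} \<Longrightarrow> card (pg_ball n x (2*k+1)) \<le> 2 * card (pg_ball n x k) + 1"
  by (simp add: card_pg_ball max_def min_def; arith)

lemma card_pg_ball_double_le_7_3:
  "x \<in> {1..n} \<Longrightarrow> 1 \<le> k \<Longrightarrow> 3 * card (pg_ball n x (2*k+1)) \<le> 7 * card (pg_ball n x k)"
  by (simp add: card_pg_ball max_def min_def; arith)

lemma pg_meas_singleton [simp]: "pg_meas mu {x} = mu x"
  unfolding pg_meas_def by simp

lemma pg_meas_nonneg: "pg_is_measure n mu \<Longrightarrow> A \<subseteq> {1..n} \<Longrightarrow> 0 \<le> pg_meas mu A"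
  unfolding pg_meas_def pg_is_measure_def by (rule sum_nonneg) (auto simp: less_imp_le)

lemma pg_meas_pos:
  "pg_is_measure n mu \<Longrightarrow> A \<subseteq> {1..n} \<Longrightarrow> A \<noteq> {} \<Longrightarrow> 0 < pg_meas mu A"
  unfolding pg_meas_def pg_is_measure_def by (rule sum_pos) (auto intro: finite_subset)

lemma pg_meas_mono:
  "pg_is_measure n mu \<Longrightarrow> A \<subseteq> B \<Longrightarrow> B \<subseteq> {1..n} \<Longrightarrow> pg_meas mu A \<le> pg_meas mu B"
  unfolding pg_meas_def pg_is_measure_def
  by (rule sum_mono2) (auto intro: finite_subset less_imp_le)

lemma pg_meas_union_le:
  assumes "pg_is_measure n mu" "A \<union> B \<subseteq> {1..n}"
  shows "pg_meas mu (A \<union> B) \<le> pg_meas mu A + pg_meas mu B"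
proof -
  have "finite A" "finite B"
    using assms(2) finite_subset by auto
  then show ?thesis
    using pg_meas_nonneg[OF assms(1), of "A \<inter> B"] assms(2)
    unfolding pg_meas_def by (auto simp: sum_Un)
qed

lemma pg_meas_ball_pos: "pg_is_measure n mu \<Longrightarrow> x \<in> {1..n} \<Longrightarrow> 0 < pg_meas mu (pg_ball n x r)"
  using pg_meas_pos[OF _ pg_ball_subset] center_in_pg_ball by blast

lemma pg_meas_unit_ball_interior:
  assumes "2 \<le> z" "z < n"
  shows "pg_meas mu (pg_ball n z 1) = mu (z - 1) + mu z + mu (z + 1)"
proof -
  have "pg_ball n z 1 = {z - 1, z, z + 1}"
    using assms unfolding pg_ball_def by auto
  moreover have "z - 1 \<noteq> z" "z - 1 \<noteq> z + 1"
    using assms by auto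
  ultimately show ?thesis
    unfolding pg_meas_def by simp
qed

lemma pg_meas_affine: "pg_meas (\<lambda>v. mu v + t * g v) A = pg_meas mu A + t * pg_meas g A"
  unfolding pg_meas_def by (simp add: sum.distrib sum_distrib_left)

lemma pg_meas_reflect_image:
  assumes "A \<subseteq> {1..n}"
  shows "pg_meas mu ((\<lambda>y. n + 1 - y) ` A) = pg_meas (\<lambda>y. mu (n + 1 - y)) A"
proof -
  have "inj_on (\<lambda>y. n + 1 - y) A"
  proof (rule inj_onI)
    fix y z assume "y \<in> A" "z \<in> A" "n + 1 - y = n + 1 - z"
    moreover have "y \<le> n" "z \<le> n"
      using assms \<open>y \<in> A\<close> \<open>z \<in> A\<close> by auto
    ultimately show "y = z" by simp
  qed
  then show ?thesis
    unfolding pg_meas_def by (simp add: sum.reindex)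
qed

lemma pg_symmetricD: "pg_symmetric n mu \<Longrightarrow> y \<in> {1..n} \<Longrightarrow> mu (n + 1 - y) = mu y"
  unfolding pg_symmetric_def by simp

lemma pg_meas_ball_reflect:
  assumes "pg_symmetric n mu" "x \<in> {1..n}"
  shows "pg_meas mu (pg_ball n (n + 1 - x) r) = pg_meas mu (pg_ball n x r)"
  unfolding pg_ball_reflect[OF assms(2)] pg_meas_reflect_image[OF pg_ball_subset]
  unfolding pg_meas_def using pg_symmetricD[OF assms(1)]
  by (intro sum.cong) (auto dest: subsetD[OF pg_ball_subset])

definition pg_ratio :: "nat \<Rightarrow> (nat \<Rightarrow> real) \<Rightarrow> nat \<Rightarrow> nat \<Rightarrow> real" where
  "pg_ratio n mu x k = pg_meas mu (pg_ball n x (2*k+1)) / pg_meas mu (pg_ball n x k)"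

lemma pg_ratio_le_iff:
  "pg_is_measure n mu \<Longrightarrow> x \<in> {1..n} \<Longrightarrow>
    pg_ratio n mu x k \<le> D \<longleftrightarrow> pg_meas mu (pg_ball n x (2*k+1)) \<le> D * pg_meas mu (pg_ball n x k)"
  unfolding pg_ratio_def by (simp add: pos_divide_le_eq pg_meas_ball_pos)

lemma pg_ratio_less_iff:
  "pg_is_measure n mu \<Longrightarrow> x \<in> {1..n} \<Longrightarrow>
    pg_ratio n mu x k < D \<longleftrightarrow> pg_meas mu (pg_ball n x (2*k+1)) < D * pg_meas mu (pg_ball n x k)"
  unfolding pg_ratio_def by (simp add: pos_divide_less_eq pg_meas_ball_pos)

lemma pg_ratio_nonneg: "pg_is_measure n mu \<Longrightarrow> x \<in> {1..n} \<Longrightarrow> 0 \<le> pg_ratio n mu x k"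
  unfolding pg_ratio_def by (intro divide_nonneg_nonneg pg_meas_nonneg[OF _ pg_ball_subset])

lemma pg_ratio_reflect:
  assumes "pg_symmetric n mu" "x \<in> {1..n}"
  shows "pg_ratio n mu (n + 1 - x) k = pg_ratio n mu x k"
  unfolding pg_ratio_def pg_meas_ball_reflect[OF assms] ..

lemma pg_ratio_whole:
  assumes "pg_is_measure n mu" "x \<in> {1..n}" "pg_ball n x k = {1..n}"
  shows "pg_ratio n mu x k = 1"
proof -
  have "pg_ball n x (2*k+1) = {1..n}"
    using assms(3) pg_ball_subset[of n x "2*k+1"] pg_ball_mono[of k "2*k+1" n x] by auto
  then show ?thesis
    using pg_meas_ball_pos[OF assms(1,2), of k] assms(3) unfolding pg_ratio_def by simp
qed

lemma pg_ratio_eq_if_ge: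
  "x \<in> {1..n} \<Longrightarrow> n \<le> k \<Longrightarrow> pg_ratio n mu x k = pg_ratio n mu x n"
proof -
  assume "x \<in> {1..n}" "n \<le> k"
  then have "pg_ball n x r = {1..n}" if "n \<le> r" for r
    using that unfolding pg_ball_def by auto
  then show ?thesis
    using \<open>n \<le> k\<close> unfolding pg_ratio_def by simp
qed

subsection \<open>The doubling constant\<close>

lemma C_mu_eq_Max:
  assumes "1 \<le> n"
  shows "C_mu n mu = Max ((\<lambda>(x, k). pg_ratio n mu x k) ` ({1..n} \<times> {..n}))"
proof -
  have "{pg_meas mu (pg_ball n x (2*k+1)) / pg_meas mu (pg_ball n x k) | x k. x \<in> {1..n}}
      = (\<lambda>(x, k). pg_ratio n mu x k) ` ({1..n} \<times> {..n})" (is "?S = ?T")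
  proof (intro equalityI subsetI)
    fix r assume "r \<in> ?S"
    then obtain x k where "x \<in> {1..n}" "r = pg_ratio n mu x k"
      unfolding pg_ratio_def by blast
    then have "r = pg_ratio n mu x (min k n)"
      using pg_ratio_eq_if_ge[of x n k mu] by (cases "k \<le> n") (auto simp: min_def)
    with \<open>x \<in> {1..n}\<close> show "r \<in> ?T" by force
  qed (auto simp: pg_ratio_def)
  then show ?thesis
    unfolding C_mu_def using assms by (simp add: cSup_eq_Max)
qed

lemma pg_ratio_le_C_mu: "x \<in> {1..n} \<Longrightarrow> pg_ratio n mu x k \<le> C_mu n mu"
proof -
  assume x: "x \<in> {1..n}"
  then have "pg_ratio n mu x (min k n) \<le> C_mu n mu"
    by (subst C_mu_eq_Max) (auto intro!: Max_ge rev_image_eqI[of "(x, min k n)"])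
  with x show ?thesis
    using pg_ratio_eq_if_ge[of x n k mu] by (cases "k \<le> n") (auto simp: min_def)
qed

lemma C_mu_less:
  "1 \<le> n \<Longrightarrow> (\<And>x k. x \<in> {1..n} \<Longrightarrow> k \<le> n \<Longrightarrow> pg_ratio n mu x k < D) \<Longrightarrow> C_mu n mu < D"
  by (subst C_mu_eq_Max) auto

lemma C_L_le_C_mu:
  assumes "1 \<le> n" "pg_is_measure n nu"
  shows "C_L n \<le> C_mu n nu"
  unfolding C_L_def
proof (rule cInf_lower)
  have "0 \<le> C_mu n mu" if "pg_is_measure n mu" for mu
    using pg_ratio_nonneg[OF that, of 1 0] pg_ratio_le_C_mu[of 1 n mu 0] assms(1) by simp
  then show "bdd_below {C_mu n mu | mu. pg_is_measure n mu}"
    by (intro bdd_belowI[of _ 0]) auto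
qed (use assms in auto)

lemma C_L_le_3:
  assumes "1 \<le> n"
  shows "C_L n \<le> 3"
proof -
  have counting: "pg_is_measure n (\<lambda>_. 1)" "pg_meas (\<lambda>_. 1) A = real (card A)" for A
    unfolding pg_meas_def pg_is_measure_def by simp_all
  have "pg_ratio n (\<lambda>_. 1) x k \<le> 3" if "x \<in> {1..n}" for x k
  proof -
    have "1 \<le> card (pg_ball n x k)"
      using center_in_pg_ball[OF that] by (auto simp: Suc_le_eq card_gt_0_iff)
    then show ?thesis
      using card_pg_ball_double_le[OF that, of k]
      unfolding pg_ratio_le_iff[OF counting(1) that] counting(2) by linarith
  qed
  then have "C_mu n (\<lambda>_. 1) \<le> 3"
    using assms by (subst C_mu_eq_Max) auto
  then show ?thesis
    using C_L_le_C_mu[OF assms counting(1)] by linarith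
qed

text \<open>The ratios at radius 0 around the vertices 1, 2, 3 already force
  \<open>(C_mu - 1)^2 \<ge> 2\<close>.\<close>

lemma C_mu_gt_7_3:
  assumes n: "3 \<le> n" and mu: "pg_is_measure n mu"
  shows "7/3 < C_mu n mu"
proof (rule ccontr)
  define C where "C = C_mu n mu"
  assume "\<not> 7/3 < C_mu n mu"
  then have C: "C \<le> 7/3" unfolding C_def by simp
  have pos: "0 < mu 1" "0 < mu 2" "0 < mu 3"
    using mu n unfolding pg_is_measure_def by auto
  have ratio: "pg_meas mu (pg_ball n x 1) \<le> C * mu x" if "x \<in> {1..n}" for x
    using pg_ratio_le_C_mu[OF that, of mu 0] pg_ratio_le_iff[OF mu that]
    unfolding C_def by (simp add: pg_ball_zero[OF that])
  have "pg_ball n 1 1 = {1, 2}" "pg_ball n 2 1 = {1, 2, 3}" "{2, 3} \<subseteq> pg_ball n 3 1"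
    using n unfolding pg_ball_def by auto
  then have "mu 1 + mu 2 \<le> C * mu 1" "mu 1 + mu 2 + mu 3 \<le> C * mu 2" "mu 2 + mu 3 \<le> C * mu 3"
    using ratio[of 1] ratio[of 2] ratio[of 3] n
      pg_meas_mono[OF mu \<open>{2, 3} \<subseteq> pg_ball n 3 1\<close> pg_ball_subset]
    by (auto simp: pg_meas_def)
  then have d: "mu 2 \<le> (C - 1) * mu 1" "mu 1 + mu 3 \<le> (C - 1) * mu 2" "mu 2 \<le> (C - 1) * mu 3"
    by (simp_all add: algebra_simps)
  then have "0 < (C - 1) * mu 1"
    using pos by linarith
  then have c: "0 < C - 1"
    using pos by (simp add: zero_less_mult_iff)
  have "2 * mu 2 \<le> (C - 1) * (mu 1 + mu 3)"
    using d(1,3) by (simp add: algebra_simps)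
  also have "\<dots> \<le> (C - 1) * ((C - 1) * mu 2)"
    using d(2) c by (intro mult_left_mono) auto
  also have "\<dots> = (C - 1) * (C - 1) * mu 2"
    by simp
  also have "\<dots> \<le> 4/3 * (4/3) * mu 2"
    using C c pos by (intro mult_right_mono mult_mono) auto
  finally show False
    using pos by simp
qed

lemma C0_mu_eq_Max: "C0_mu n mu = Max ((\<lambda>x. pg_ratio n mu x 0) ` {1..n})"
proof -
  have "{pg_meas mu (pg_ball n x 1) / mu x | x. x \<in> {1..n}} = (\<lambda>x. pg_ratio n mu x 0) ` {1..n}"
    unfolding pg_ratio_def by (auto simp: pg_ball_zero)
  then show ?thesis
    unfolding C0_mu_def by simp
qed

lemma C0_mu_le_C_mu: "1 \<le> n \<Longrightarrow> C0_mu n mu \<le> C_mu n mu"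
  unfolding C0_mu_eq_Max by (auto intro: pg_ratio_le_C_mu)

lemma nat_ceiling_div_3_le_imp:
  assumes "nat \<lceil>(real n - 2) / 3\<rceil> \<le> k"
  shows "n \<le> 3 * k + 2"
proof -
  have "(real n - 2) / 3 \<le> real k"
    using assms by linarith
  then have "real n \<le> real (3 * k + 2)"
    by simp
  then show ?thesis
    by (simp only: of_nat_le_iff)
qed

lemma M1_range_nonempty:
  assumes "3 \<le> n"
  shows "{..<nat \<lceil>(real n - 2) / 3\<rceil>} \<noteq> {}"
proof -
  have "0 < (real n - 2) / 3"
    using assms by simp
  then have "0 < nat \<lceil>(real n - 2) / 3\<rceil>"
    by linarith
  then show ?thesis
    by (simp add: lessThan_empty_iff)
qed

lemma M1_eq_Max:
  assumes "3 \<le> n"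
  shows "M1 n mu = Max ((\<lambda>k. pg_ratio n mu 1 k) ` {..<nat \<lceil>(real n - 2) / 3\<rceil>})"
proof -
  have "{pg_meas mu (pg_ball n 1 (2*k+1)) / pg_meas mu (pg_ball n 1 k) | k.
      k < nat \<lceil>(real n - 2) / 3\<rceil>} = (\<lambda>k. pg_ratio n mu 1 k) ` {..<nat \<lceil>(real n - 2) / 3\<rceil>}"
    unfolding pg_ratio_def by auto
  then show ?thesis
    unfolding M1_def using M1_range_nonempty[OF assms] by (simp add: cSup_eq_Max)
qed

lemma M1_le_C_mu: "3 \<le> n \<Longrightarrow> M1 n mu \<le> C_mu n mu"
  using M1_range_nonempty by (simp add: M1_eq_Max pg_ratio_le_C_mu)

lemma pg_ratio_center_1_le_M1:
  "3 \<le> n \<Longrightarrow> k < nat \<lceil>(real n - 2) / 3\<rceil> \<Longrightarrow> pg_ratio n mu 1 k \<le> M1 n mu"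
  by (simp add: M1_eq_Max)

subsection \<open>A first-order optimality condition\<close>

lemma eventually_affine_neg_at_right:
  fixes a b :: real
  assumes "a \<le> 0" "a < 0 \<or> b < 0"
  shows "\<forall>\<^sub>F t in at_right 0. a + t * b < 0"
  using assms(2)
proof
  assume "a < 0"
  have "((\<lambda>t. a + t * b) \<longlongrightarrow> a + 0 * b) (at_right 0)"
    by (intro tendsto_intros)
  with \<open>a < 0\<close> show ?thesis
    by (auto dest: order_tendstoD(2))
next
  assume "b < 0"
  show ?thesis
    using eventually_at_right_less[of 0]
    by eventually_elim (use assms(1) \<open>b < 0\<close> in \<open>simp add: mult_pos_neg add_nonpos_neg\<close>)
qed

lemma C_mu_perturb_less:
  assumes n: "1 \<le> n" and mu: "pg_is_measure n mu"
    and descent: "\<And>x k. x \<in> {1..n} \<Longrightarrow> pg_ratio n mu x k = C_mu n mu \<Longrightarrow>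
      pg_meas g (pg_ball n x (2*k+1)) < C_mu n mu * pg_meas g (pg_ball n x k)"
  obtains t where "pg_is_measure n (\<lambda>v. mu v + t * g v)" "C_mu n (\<lambda>v. mu v + t * g v) < C_mu n mu"
proof -
  define C where "C = C_mu n mu"
  define B where "B nu x k = pg_meas nu (pg_ball n x (2*k+1)) - C * pg_meas nu (pg_ball n x k)"
    for nu x k
  define nu where "nu t v = mu v + t * g v" for t v
  have "B mu x k \<le> 0" "B mu x k < 0 \<or> B g x k < 0" if "x \<in> {1..n}" for x k
    using pg_ratio_le_C_mu[OF that, of mu k] descent[OF that, of k]
      pg_ratio_le_iff[OF mu that] pg_ratio_less_iff[OF mu that]
    unfolding B_def C_def by (auto simp: less_le)
  then have "\<forall>\<^sub>F t in at_right 0. B mu x k + t * B g x k < 0" if "x \<in> {1..n}" for x k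
    using that by (intro eventually_affine_neg_at_right)
  moreover have "B (nu t) x k = B mu x k + t * B g x k" for t x k
    unfolding B_def nu_def pg_meas_affine by (simp add: algebra_simps)
  ultimately have "\<forall>\<^sub>F t in at_right 0. \<forall>p \<in> {1..n} \<times> {..n}. B (nu t) (fst p) (snd p) < 0"
    by (intro eventually_ball_finite) auto
  moreover have "\<forall>\<^sub>F t in at_right 0. \<forall>y \<in> {1..n}. 0 < nu t y"
  proof (intro eventually_ball_finite ballI)
    fix y assume "y \<in> {1..n}"
    then have "- mu y < 0"
      using mu unfolding pg_is_measure_def by simp
    then show "\<forall>\<^sub>F t in at_right 0. 0 < nu t y"
      using eventually_affine_neg_at_right[of "- mu y" "- g y"] unfolding nu_def
      by (auto elim: eventually_mono)
  qed simp
  ultimately obtain t where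
    better: "\<forall>p \<in> {1..n} \<times> {..n}. B (nu t) (fst p) (snd p) < 0" and
    measure: "pg_is_measure n (nu t)"
    unfolding pg_is_measure_def
    using eventually_happens'[OF trivial_limit_at_right_real eventually_conj] by blast
  have "C_mu n (nu t) < C"
  proof (rule C_mu_less[OF n])
    fix x k assume x: "x \<in> {1..n}" and "k \<le> n"
    then have "B (nu t) x k < 0"
      using better by fastforce
    then show "pg_ratio n (nu t) x k < C"
      unfolding pg_ratio_less_iff[OF measure x] B_def by simp
  qed
  with measure show thesis
    using that[of t] unfolding nu_def C_def by simp
qed

lemma optimal_measure_tight_ball:
  assumes n: "1 \<le> n" and mu: "pg_is_measure n mu" and opt: "C_mu n mu = C_L n"
  obtains x k where "x \<in> {1..n}" "pg_ratio n mu x k = C_mu n mu"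
    "C_mu n mu * pg_meas g (pg_ball n x k) \<le> pg_meas g (pg_ball n x (2*k+1))"
proof (rule ccontr)
  assume "\<not> thesis"
  with that have "pg_meas g (pg_ball n x (2*k+1)) < C_mu n mu * pg_meas g (pg_ball n x k)"
    if "x \<in> {1..n}" "pg_ratio n mu x k = C_mu n mu" for x k
    using that by fastforce
  then obtain t where "pg_is_measure n (\<lambda>v. mu v + t * g v)"
    "C_mu n (\<lambda>v. mu v + t * g v) < C_mu n mu"
    using C_mu_perturb_less[OF n mu] by blast
  with C_L_le_C_mu[OF n] opt show False
    by fastforce
qed

lemma optimal_C0_mu_eq_C_mu:
  assumes n: "3 \<le> n" and mu: "pg_is_measure n mu" and opt: "C_mu n mu = C_L n"
  shows "C0_mu n mu = C_mu n mu"
proof -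
  have counting: "pg_meas (\<lambda>_. 1) A = real (card A)" for A
    unfolding pg_meas_def by simp
  obtain x k where x: "x \<in> {1..n}" and tight: "pg_ratio n mu x k = C_mu n mu"
    and no_descent: "C_mu n mu * card (pg_ball n x k) \<le> card (pg_ball n x (2*k+1))"
    using optimal_measure_tight_ball[of n mu "\<lambda>_. 1"] n mu opt unfolding counting by auto
  have "k = 0"
  proof (rule ccontr)
    assume "k \<noteq> 0"
    then have "3 * real (card (pg_ball n x (2*k+1))) \<le> 7 * real (card (pg_ball n x k))"
      using card_pg_ball_double_le_7_3[OF x, of k] by (simp flip: of_nat_mult)
    moreover have "0 < card (pg_ball n x k)"
      using center_in_pg_ball[OF x] by (auto simp: card_gt_0_iff)
    then have "7/3 * card (pg_ball n x k) < C_mu n mu * card (pg_ball n x k)"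
      using C_mu_gt_7_3[OF n mu] by (intro mult_strict_right_mono) auto
    ultimately have "card (pg_ball n x (2*k+1)) < C_mu n mu * card (pg_ball n x k)"
      by linarith
    with no_descent show False
      by simp
  qed
  with tight x have "C_mu n mu \<le> C0_mu n mu"
    unfolding C0_mu_eq_Max by (metis Max_ge finite_atLeastAtMost finite_imageI image_eqI)
  with C0_mu_le_C_mu[of n mu] n show ?thesis
    by simp
qed

subsection \<open>Unimodality\<close>

lemma concave_symmetric_mono:
  fixes f :: "nat \<Rightarrow> real"
  assumes concave: "\<And>z. 2 \<le> z \<Longrightarrow> z < n \<Longrightarrow> f (z - 1) + f (z + 1) \<le> 2 * f z"
    and symmetric: "\<And>y. y \<in> {1..n} \<Longrightarrow> f (n + 1 - y) = f y"
    and ij: "1 \<le> i" "i \<le> j" "i + j \<le> n + 1"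
  shows "f i \<le> f j"
proof -
  have slope_decreasing: "f (j + 1) - f j \<le> f (i + 1) - f i" if "1 \<le> i" "i \<le> j" "j < n" for i j
    using that(2,3)
  proof (induction j rule: dec_induct)
    case (step j)
    then show ?case
      using concave[of "j + 1"] that(1) by simp
  qed simp
  \<comment> \<open>by symmetry the slope at \<open>n - z\<close> is minus the slope at \<open>z\<close>\<close>
  have step_up: "f z \<le> f (z + 1)" if "1 \<le> z" "2 * z \<le> n" for z
  proof -
    have "f (n - z + 1) - f (n - z) \<le> f (z + 1) - f z"
      using slope_decreasing[of z "n - z"] that by simp
    moreover have "f (n - z + 1) = f z" "f (n - z) = f (z + 1)"
      using symmetric[of z] symmetric[of "z + 1"] that by (simp_all add: Suc_diff_le)
    ultimately show ?thesis
      by simp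
  qed
  have left_half: "f i \<le> f j" if "1 \<le> i" "i \<le> j" "2 * j \<le> n + 2" for i j
    using that(2,3)
  proof (induction j rule: dec_induct)
    case (step j)
    then show ?case
      using step_up[of j] that(1) by simp
  qed simp
  show ?thesis
  proof (cases "2 * j \<le> n + 2")
    case False
    then have "f i \<le> f (n + 1 - j)"
      using ij by (intro left_half) auto
    also have "\<dots> = f j"
      using ij by (intro symmetric) auto
    finally show ?thesis .
  qed (use ij left_half in auto)
qed

lemma neighbours_le_C_mu:
  assumes "pg_is_measure n mu" "2 \<le> z" "z < n"
  shows "mu (z - 1) + mu z + mu (z + 1) \<le> C_mu n mu * mu z"
proof -
  have z: "z \<in> {1..n}"
    using assms by simp
  have "pg_meas mu (pg_ball n z 1) \<le> C_mu n mu * mu z"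
    using pg_ratio_le_C_mu[OF z, of mu 0] pg_ratio_le_iff[OF assms(1) z, of 0 "C_mu n mu"]
    by (simp add: pg_ball_zero[OF z])
  then show ?thesis
    unfolding pg_meas_unit_ball_interior[OF assms(2,3)] .
qed

lemma symmetric_measure_unimodal:
  assumes mu: "pg_is_measure n mu" and sym: "pg_symmetric n mu" and C3: "C_mu n mu \<le> 3"
    and "1 \<le> i" "i \<le> j" "i + j \<le> n + 1"
  shows "mu i \<le> mu j"
proof (rule concave_symmetric_mono[of n mu])
  fix z assume z: "2 \<le> z" "z < n"
  have "0 < mu z"
    using mu z unfolding pg_is_measure_def by simp
  then have "C_mu n mu * mu z \<le> 3 * mu z"
    using C3 by (intro mult_right_mono) auto
  then show "mu (z - 1) + mu (z + 1) \<le> 2 * mu z"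
    using neighbours_le_C_mu[OF mu z] by simp
qed (use pg_symmetricD[OF sym] assms in auto)

lemma pg_ratio_center_1_le_2:
  assumes mu: "pg_is_measure n mu" and sym: "pg_symmetric n mu" and "1 \<le> n" "n \<le> 2 * k + 2"
  shows "pg_ratio n mu 1 k \<le> 2"
proof -
  have one: "1 \<in> {1..n}"
    using assms by simp
  have "pg_ball n 1 (2*k+1) = pg_ball n 1 k \<union> pg_ball n n k"
    using assms unfolding pg_ball_center_1 by (auto simp: pg_ball_eq_atLeastAtMost)
  moreover have "pg_meas mu (pg_ball n n k) = pg_meas mu (pg_ball n 1 k)"
    using pg_meas_ball_reflect[OF sym one, of k] by simp
  ultimately have "pg_meas mu (pg_ball n 1 (2*k+1)) \<le> 2 * pg_meas mu (pg_ball n 1 k)"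
    using pg_meas_union_le[OF mu, of "pg_ball n 1 k" "pg_ball n n k"] pg_ball_subset[of n]
    by simp
  then show ?thesis
    unfolding pg_ratio_le_iff[OF mu one] .
qed

text \<open>Symmetry and unimodality let \<open>mu (k+2)\<close> and \<open>mu (k+1)\<close> dominate \<open>mu (2k+1)\<close> and
  \<open>mu (2k+2)\<close>; the ratio bound at \<open>k+1\<close> then absorbs them with a strict gain of \<open>mu k\<close>.\<close>

lemma pg_ratio_center_1_less_C_mu:
  assumes mu: "pg_is_measure n mu" and sym: "pg_symmetric n mu" and C3: "C_mu n mu \<le> 3"
    and k: "2 * k + 2 < n" "n \<le> 3 * k + 2"
  shows "pg_ratio n mu 1 k < C_mu n mu"
proof -
  define C where "C = C_mu n mu"
  have one: "1 \<in> {1..n}" and "1 \<le> k"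
    using k by auto
  have "pg_meas mu (pg_ball n 1 (2*k+1)) = pg_meas mu {1..2*k} + mu (2*k+1) + mu (2*k+2)"
    unfolding pg_ball_center_1 pg_meas_def using k by (simp add: sum.cl_ivl_Suc)
  also have "pg_meas mu {1..2*k} \<le> C * pg_meas mu {1..k}"
  proof -
    have "pg_ball n 1 (2*(k-1)+1) = {1..2*k}" "pg_ball n 1 (k-1) = {1..k}"
      unfolding pg_ball_center_1 using \<open>1 \<le> k\<close> k by auto
    then show ?thesis
      using pg_ratio_le_C_mu[OF one, of mu "k - 1"] pg_ratio_le_iff[OF mu one, of "k - 1" C]
      unfolding C_def by simp
  qed
  also have "mu (2*k+1) \<le> mu (k+2)"
  proof -
    have "mu (n - 2*k) \<le> mu (k+2)"
      using k \<open>1 \<le> k\<close> by (intro symmetric_measure_unimodal[OF mu sym C3]) auto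
    then show ?thesis
      using pg_symmetricD[OF sym, of "2*k+1"] k by simp
  qed
  also have "mu (2*k+2) \<le> mu (k+1)"
  proof -
    have "mu (n - 2*k - 1) \<le> mu (k+1)"
      using k by (intro symmetric_measure_unimodal[OF mu sym C3]) auto
    then show ?thesis
      using pg_symmetricD[OF sym, of "2*k+2"] k by simp
  qed
  also have "C * pg_meas mu {1..k} + mu (k+2) + mu (k+1) < C * pg_meas mu {1..k+1}"
  proof -
    have "pg_meas mu {1..k+1} = pg_meas mu {1..k} + mu (k+1)"
      by (simp add: pg_meas_def)
    moreover have "0 < mu k"
      using mu \<open>1 \<le> k\<close> k unfolding pg_is_measure_def by simp
    ultimately show ?thesis
      using neighbours_le_C_mu[OF mu, of "k + 1"] \<open>1 \<le> k\<close> k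
      unfolding C_def by (simp add: algebra_simps)
  qed
  also have "{1..k+1} = pg_ball n 1 k"
    unfolding pg_ball_center_1 using k by simp
  finally show ?thesis
    unfolding pg_ratio_less_iff[OF mu one] C_def by simp
qed

lemma pg_ratio_le_pg_ratio_center_1:
  assumes mu: "pg_is_measure n mu" and x: "x \<in> {1..n}" and "x \<le> k + 1" "x + k < n"
  shows "pg_ratio n mu x k \<le> pg_ratio n mu 1 (x + k - 1)"
proof -
  have "pg_ball n x k = pg_ball n 1 (x + k - 1)"
    using assms unfolding pg_ball_center_1 by (auto simp: pg_ball_eq_atLeastAtMost)
  moreover have "pg_ball n x (2*k+1) \<subseteq> pg_ball n 1 (2 * (x + k - 1) + 1)"
    using assms unfolding pg_ball_center_1 by (auto simp: pg_ball_eq_atLeastAtMost)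
  ultimately show ?thesis
    unfolding pg_ratio_def
    by (auto intro!: divide_right_mono pg_meas_mono[OF mu] pg_ball_subset
        pg_meas_nonneg[OF mu pg_ball_subset])
qed

lemma pg_ratio_center_1_less_C_mu_if_ge:
  assumes n: "3 \<le> n" and mu: "pg_is_measure n mu" and sym: "pg_symmetric n mu"
    and C3: "C_mu n mu \<le> 3" and j: "nat \<lceil>(real n - 2) / 3\<rceil> \<le> j" "j + 1 < n"
  shows "pg_ratio n mu 1 j < C_mu n mu"
proof (cases "n \<le> 2 * j + 2")
  case True
  then show ?thesis
    using pg_ratio_center_1_le_2[OF mu sym _ True] C_mu_gt_7_3[OF n mu] n by simp
next
  case False
  then show ?thesis
    using pg_ratio_center_1_less_C_mu[OF mu sym C3] nat_ceiling_div_3_le_imp[OF j(1)] by simp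
qed

lemma tight_endpoint_ball_imp_C_mu_le_M1:
  assumes n: "3 \<le> n" and mu: "pg_is_measure n mu" and sym: "pg_symmetric n mu"
    and C3: "C_mu n mu \<le> 3" and x: "x \<in> {1..n}"
    and endpoint: "1 \<in> pg_ball n x k \<or> n \<in> pg_ball n x k"
    and tight: "pg_ratio n mu x k = C_mu n mu"
  shows "C_mu n mu \<le> M1 n mu"
proof -
  obtain y where y: "y \<in> {1..n}" "1 \<in> pg_ball n y k" "pg_ratio n mu y k = C_mu n mu"
  proof (cases "1 \<in> pg_ball n x k")
    case False
    show ?thesis
    proof (rule that[of "n + 1 - x"])
      show "1 \<in> pg_ball n (n + 1 - x) k"
        using False endpoint x unfolding pg_ball_def by auto
    qed (use x pg_ratio_reflect[OF sym x] tight in auto)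
  qed (use x tight in blast)
  have "y \<le> k + 1"
    using y(2) unfolding pg_ball_def by auto
  have "y + k < n"
  proof (rule ccontr)
    assume "\<not> y + k < n"
    then have "pg_ball n y k = {1..n}"
      using \<open>y \<le> k + 1\<close> unfolding pg_ball_def by auto
    with y(3) pg_ratio_whole[OF mu y(1)] C_mu_gt_7_3[OF n mu] show False
      by simp
  qed
  define j where "j = y + k - 1"
  have tight_at_1: "C_mu n mu \<le> pg_ratio n mu 1 j"
    using pg_ratio_le_pg_ratio_center_1[OF mu y(1) \<open>y \<le> k + 1\<close> \<open>y + k < n\<close>] y(3)
    unfolding j_def by simp
  moreover have "j + 1 < n"
    using \<open>y + k < n\<close> y(1) unfolding j_def by simp
  then have "j < nat \<lceil>(real n - 2) / 3\<rceil>"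
    using tight_at_1 pg_ratio_center_1_less_C_mu_if_ge[OF n mu sym C3, of j] by (metis not_less leD)
  ultimately show ?thesis
    using pg_ratio_center_1_le_M1[OF n] by (meson order_trans)
qed

subsection \<open>The endpoint weight\<close>

definition endpoint_weight :: "nat \<Rightarrow> nat \<Rightarrow> real" where
  "endpoint_weight n y = (1/4)^y + (1/4)^(n + 1 - y)"

lemma quarter_power_sum_le:
  assumes "1 \<le> l"
  shows "3 * (\<Sum>y\<in>{l..u}. (1/4::real)^y) \<le> (1/4)^(l - 1)"
proof (cases "l \<le> u")
  case True
  have "(1 - 1/4) * (\<Sum>y\<in>{l..u}. (1/4::real)^y) = (1/4)^l - (1/4)^Suc u"
    using sum_gp_multiplied[OF True] .
  moreover have "(1/4::real)^l = 1/4 * (1/4)^(l - 1)"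
    using assms by (simp flip: power_Suc)
  ultimately show ?thesis
    by simp
qed simp

lemma endpoint_weight_ball:
  assumes "x \<in> {1..n}"
  shows "pg_meas (endpoint_weight n) (pg_ball n x r)
    = (\<Sum>y\<in>pg_ball n x r. (1/4)^y) + (\<Sum>y\<in>pg_ball n (n + 1 - x) r. (1/4)^y)"
proof -
  have "(\<Sum>y\<in>pg_ball n (n + 1 - x) r. (1/4::real)^y) = (\<Sum>y\<in>pg_ball n x r. (1/4)^(n + 1 - y))"
    using pg_meas_reflect_image[OF pg_ball_subset, of "\<lambda>y. (1/4::real)^y" n x r]
    unfolding pg_ball_reflect[OF assms] pg_meas_def .
  then show ?thesis
    unfolding endpoint_weight_def pg_meas_def by (simp add: sum.distrib)
qed

lemma endpoint_weight_interior_ball_le: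
  assumes x: "x \<in> {1..n}" and far: "k + 2 \<le> x" "x + k < n"
  shows "3 * pg_meas (endpoint_weight n) (pg_ball n x k)
    \<le> endpoint_weight n (x - k - 1) + endpoint_weight n (x + k + 1)"
proof -
  have "pg_ball n x k = {x - k..x + k}"
    using far x by (simp add: pg_ball_eq_atLeastAtMost)
  moreover have "pg_ball n (n + 1 - x) k = {n + 1 - x - k..n + 1 - x + k}"
  proof -
    have "n + 1 - x \<in> {1..n}"
      using x by auto
    then show ?thesis
      using far by (simp add: pg_ball_eq_atLeastAtMost)
  qed
  moreover have "3 * (\<Sum>y\<in>{x - k..x + k}. (1/4::real)^y) \<le> (1/4)^(x - k - 1)"
    using far by (intro quarter_power_sum_le) simp
  moreover have "3 * (\<Sum>y\<in>{n + 1 - x - k..n + 1 - x + k}. (1/4::real)^y) \<le> (1/4)^(n - x - k)"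
    using quarter_power_sum_le[of "n + 1 - x - k" "n + 1 - x + k"] far
    by (simp add: Suc_diff_le)
  ultimately have "3 * pg_meas (endpoint_weight n) (pg_ball n x k)
      \<le> (1/4)^(x - k - 1) + (1/4)^(n + 1 - (x + k + 1))"
    unfolding endpoint_weight_ball[OF x] by simp
  moreover have "0 \<le> (1/4::real)^(n + 1 - (x - k - 1))" "0 \<le> (1/4::real)^(x + k + 1)"
    by simp_all
  ultimately show ?thesis
    unfolding endpoint_weight_def by linarith
qed

lemma endpoint_weight_interior_ball:
  assumes x: "x \<in> {1..n}" and "1 \<notin> pg_ball n x k" "n \<notin> pg_ball n x k"
  shows "3 * pg_meas (endpoint_weight n) (pg_ball n x k)
    < pg_meas (endpoint_weight n) (pg_ball n x (2*k+1))"
proof -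
  define w where "w = endpoint_weight n"
  have far: "k + 2 \<le> x" "x + k < n"
    using assms unfolding pg_ball_def by auto
  have w: "pg_is_measure n w"
    unfolding w_def endpoint_weight_def pg_is_measure_def by (simp add: add_pos_pos)
  let ?A = "insert (x - k - 1) (insert (x + k + 1) (pg_ball n x k))"
  have "x - k - 1 \<notin> insert (x + k + 1) (pg_ball n x k)" "x + k + 1 \<notin> pg_ball n x k"
    using far x unfolding pg_ball_def by auto
  then have "pg_meas w ?A = pg_meas w (pg_ball n x k) + w (x - k - 1) + w (x + k + 1)"
    unfolding pg_meas_def by simp
  also have "\<dots> > 3 * pg_meas w (pg_ball n x k)"
    using endpoint_weight_interior_ball_le[OF x far] pg_meas_ball_pos[OF w x, of k]
    unfolding w_def by linarith
  moreover have "pg_meas w ?A \<le> pg_meas w (pg_ball n x (2*k+1))"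
    using far x by (intro pg_meas_mono[OF w _ pg_ball_subset]) (auto simp: pg_ball_def)
  ultimately show ?thesis
    unfolding w_def by linarith
qed

lemma optimal_M1_eq_C_mu:
  assumes n: "3 \<le> n" and mu: "pg_is_measure n mu" and sym: "pg_symmetric n mu"
    and opt: "C_mu n mu = C_L n"
  shows "M1 n mu = C_mu n mu"
proof -
  define w where "w = endpoint_weight n"
  have C3: "C_mu n mu \<le> 3"
    using opt C_L_le_3 n by simp
  have "pg_meas (\<lambda>v. - w v) A = - pg_meas w A" for A
    unfolding pg_meas_def by (simp add: sum_negf)
  then obtain x k where x: "x \<in> {1..n}" and tight: "pg_ratio n mu x k = C_mu n mu"
    and no_descent: "pg_meas w (pg_ball n x (2*k+1)) \<le> C_mu n mu * pg_meas w (pg_ball n x k)"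
    using optimal_measure_tight_ball[of n mu "\<lambda>v. - w v"] n mu opt by auto
  have "0 \<le> pg_meas w (pg_ball n x k)"
    unfolding w_def endpoint_weight_def pg_meas_def by (intro sum_nonneg) (simp add: add_nonneg_nonneg)
  then have "pg_meas w (pg_ball n x (2*k+1)) \<le> 3 * pg_meas w (pg_ball n x k)"
    using no_descent mult_right_mono[OF C3] by fastforce
  then have "1 \<in> pg_ball n x k \<or> n \<in> pg_ball n x k"
    using endpoint_weight_interior_ball[OF x] unfolding w_def by fastforce
  then have "C_mu n mu \<le> M1 n mu"
    by (rule tight_endpoint_ball_imp_C_mu_le_M1[OF n mu sym C3 x _ tight])
  with M1_le_C_mu[OF n, of mu] show ?thesis
    by simp
qed

theorem proposition6p4:
  fixes n :: nat and mu :: "nat \<Rightarrow> real"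
  assumes "n \<ge> 3"
    and "pg_is_measure n mu"
    and "pg_symmetric n mu"
    and "C_mu n mu = C_L n"
  shows "M1 n mu = C0_mu n mu \<and> C0_mu n mu = C_L n"
  using optimal_C0_mu_eq_C_mu[OF assms(1,2,4)] optimal_M1_eq_C_mu[OF assms] assms(4) by simp

end
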